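(* Let $\mathcal{M}$ (mobile devices) and $\mathcal{E}$ (edge servers) be finite nonempty index sets, and let $\hat{D}_{\text{cm},ij}\ge 0$, $\hat{D}_{\text{ES}(s),ij}\ge 0$ and $c_{ij}\in\mathbb{R}$ be given constants for $(i,j)\in\mathcal{M}\times\mathcal{E}$. Let $\mathcal{X}$ be the set of matrices $\mathbf{X}=(x_{ij})\in\{0,1\}^{\mathcal{M}\times\mathcal{E}}$ with $\sum_{j\in\mathcal{E}}x_{ij}\le 1$ for all $i\in\mathcal{M}$, and consider the primal user-association problem $$\min_{\mathbf{X}\in\mathcal{X}} F(\mathbf{X}),\qquad F(\mathbf{X})=\sum_{j\in\mathcal{E}}\Big(\sum_{i\in\mathcal{M}}\sqrt{\hat{D}_{\text{ES}(s),ij}}\,x_{ij}\Big)^2+\sum_{j\in\mathcal{E}}\Big(\sum_{i\in\mathcal{M}}\sqrt{\hat{D}_{\text{cm},ij}}\,x_{ij}\Big)^2+\sum_{i\in\mathcal{M}}\sum_{j\in\mathcal{E}}c_{ij}x_{ij},$$ with optimal value $\hat f^*=\min_{\mathbf{X}\in\mathcal{X}}F(\mathbf{X})$. This is reformulated with slack variables $a_j,b_j\ge 0$ and constraints $\sqrt{a_j}=\sum_{i}\sqrt{\hat{D}_{\text{cm},ij}}x_{ij}$, $\sqrt{b_j}=\sum_i\sqrt{\hat{D}_{\text{ES}(s),ij}}x_{ij}$ ($j\in\mathcal{E}$) and objective $\sum_j(a_j+b_j)+\sum_{i,j}c_{ij}x_{ij}$, whose Lagrangian with multipliers $\boldsymbol{\mu}=(\mu_j)_{j\in\mathcal{E}}$,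 $\boldsymbol{\nu}=(\nu_j)_{j\in\mathcal{E}}$ is $$\mathcal{L}(\mathbf{X},\mathbf{a},\mathbf{b};\boldsymbol{\mu},\boldsymbol{\nu})=\sum_{j}(a_j+b_j)+\sum_{i,j}c_{ij}x_{ij}+\sum_j\mu_j\Big(-\sqrt{a_j}+\sum_i\sqrt{\hat{D}_{\text{cm},ij}}x_{ij}\Big)+\sum_j\nu_j\Big(-\sqrt{b_j}+\sum_i\sqrt{\hat{D}_{\text{ES}(s),ij}}x_{ij}\Big).$$ Define the dual function $$g(\boldsymbol{\mu},\boldsymbol{\nu})=-\sum_{j\in\mathcal{E}}\Big(\frac{\mu_j^2}{4}+\frac{\nu_j^2}{4}\Big)+\sum_{i\in\mathcal{M}}\min\Big\{0,\ \min_{j\in\mathcal{E}}\big(\mu_j\sqrt{\hat{D}_{\text{cm},ij}}+\nu_j\sqrt{\hat{D}_{\text{ES}(s),ij}}+c_{ij}\big)\Big\},$$ let $(\boldsymbol{\mu}^*,\boldsymbol{\nu}^* )$ be a maximizer of $g$, and define the recovered solution $\hat a_j=(\mu_j^* )^2/4$, $\hat b_j=(\nu_j^* )^2/4$, and $\hat{\mathbf{X}}\in\mathcal{X}$ by: for each $i$, $\hat x_{ij}=1$ for $j=\arg\min_{j\in\mathcal{E}}(\mu^*_j\sqrt{\hat{D}_{\text{cm},ij}}+\nu^*_j\sqrt{\hat{D}_{\text{ES}(s),ij}}+c_{ij})$ if this minimum is not larger than $0$, and $\hat x_{ij}=0$ for all other $j$ (all $\hat x_{ij}=0$ if the minimum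 is larger than $0$). Let $$\Delta_j^{(1)}=\sqrt{\hat a_j}-\sum_{i\in\mathcal{M}}\sqrt{\hat{D}_{\text{cm},ij}}\,\hat x_{ij},\qquad \Delta_j^{(2)}=\sqrt{\hat b_j}-\sum_{i\in\mathcal{M}}\sqrt{\hat{D}_{\text{ES}(s),ij}}\,\hat x_{ij}.$$ Then the performance gap between $\hat{\mathbf{X}}$ and the globally optimal solution, $F(\hat{\mathbf{X}})-\hat f^*$, is bounded by $\mathcal{O}\big(\sum_{j\in\mathcal{E}}((\Delta_j^{(1)})^2+(\Delta_j^{(2)})^2)\big)$.
   Context: This arises from a mobile edge computing model: $x_{ij}=1$ means mobile device $i$ offloads its task to edge server $j$, and $x_{ij}=0$ for all $j$ means local computation. The constants are $\hat{D}_{\text{cm},ij}=d_i/R_{ij}$ (task bits over rate), $\hat{D}_{\text{ES}(s),ij}=f_i\rho_i/(F_{\text{ES},j}Z_{\text{ES},j})$, and $c_{ij}$ collects the remaining delay/energy-penalty terms; only the abstract optimization problem above matters for the claim. *)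

theory Defs
  imports Complex_Main
begin

text \<open>Association matrices X indexed by devices i (type 'm) and servers j (type 'e).
  Entries outside M x E are fixed to 0, so the feasible set is finite.\<close>
definition feasible :: "'m set \<Rightarrow> 'e set \<Rightarrow> ('m \<Rightarrow> 'e \<Rightarrow> real) set" where
  "feasible M E = {X. (\<forall>i j. X i j \<in> {0, 1}) \<and> (\<forall>i j. (i \<notin> M \<or> j \<notin> E) \<longrightarrow> X i j = 0)
                      \<and> (\<forall>i\<in>M. (\<Sum>j\<in>E. X i j) \<le> 1)}"

definition objF :: "'m set \<Rightarrow> 'e set \<Rightarrow> ('m \<Rightarrow> 'e \<Rightarrow> real) \<Rightarrow> ('m \<Rightarrow> 'e \<Rightarrow> real)
    \<Rightarrow> ('m \<Rightarrow> 'e \<Rightarrow> real) \<Rightarrow> ('m \<Rightarrow> 'e \<Rightarrow> real) \<Rightarrow> real" where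
  "objF M E Dcm Des c X =
     (\<Sum>j\<in>E. (\<Sum>i\<in>M. sqrt (Des i j) * X i j)^2)
   + (\<Sum>j\<in>E. (\<Sum>i\<in>M. sqrt (Dcm i j) * X i j)^2)
   + (\<Sum>i\<in>M. \<Sum>j\<in>E. c i j * X i j)"

definition fstar :: "'m set \<Rightarrow> 'e set \<Rightarrow> ('m \<Rightarrow> 'e \<Rightarrow> real) \<Rightarrow> ('m \<Rightarrow> 'e \<Rightarrow> real)
    \<Rightarrow> ('m \<Rightarrow> 'e \<Rightarrow> real) \<Rightarrow> real" where
  "fstar M E Dcm Des c = Min (objF M E Dcm Des c ` feasible M E)"

definition phi :: "('m \<Rightarrow> 'e \<Rightarrow> real) \<Rightarrow> ('m \<Rightarrow> 'e \<Rightarrow> real) \<Rightarrow> ('m \<Rightarrow> 'e \<Rightarrow> real)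
    \<Rightarrow> ('e \<Rightarrow> real) \<Rightarrow> ('e \<Rightarrow> real) \<Rightarrow> 'm \<Rightarrow> 'e \<Rightarrow> real" where
  "phi Dcm Des c mu nu i j = mu j * sqrt (Dcm i j) + nu j * sqrt (Des i j) + c i j"

definition dual_g :: "'m set \<Rightarrow> 'e set \<Rightarrow> ('m \<Rightarrow> 'e \<Rightarrow> real) \<Rightarrow> ('m \<Rightarrow> 'e \<Rightarrow> real)
    \<Rightarrow> ('m \<Rightarrow> 'e \<Rightarrow> real) \<Rightarrow> ('e \<Rightarrow> real) \<Rightarrow> ('e \<Rightarrow> real) \<Rightarrow> real" where
  "dual_g M E Dcm Des c mu nu =
     - (\<Sum>j\<in>E. (mu j)^2 / 4 + (nu j)^2 / 4)
   + (\<Sum>i\<in>M. min 0 (Min (phi Dcm Des c mu nu i ` E)))"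

definition recovered :: "'m set \<Rightarrow> 'e set \<Rightarrow> ('m \<Rightarrow> 'e \<Rightarrow> real) \<Rightarrow> ('m \<Rightarrow> 'e \<Rightarrow> real)
    \<Rightarrow> ('m \<Rightarrow> 'e \<Rightarrow> real) \<Rightarrow> ('e \<Rightarrow> real) \<Rightarrow> ('e \<Rightarrow> real) \<Rightarrow> ('m \<Rightarrow> 'e \<Rightarrow> real) \<Rightarrow> bool" where
  "recovered M E Dcm Des c mu nu X \<longleftrightarrow>
     (\<forall>i\<in>M. (Min (phi Dcm Des c mu nu i ` E) \<le> 0 \<longrightarrow>
                 (\<exists>j\<in>E. phi Dcm Des c mu nu i j = Min (phi Dcm Des c mu nu i ` E)
                        \<and> X i j = 1 \<and> (\<forall>k\<in>E. k \<noteq> j \<longrightarrow> X i k = 0)))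
           \<and> (Min (phi Dcm Des c mu nu i ` E) > 0 \<longrightarrow> (\<forall>j\<in>E. X i j = 0)))"

end

theory Submission
  imports Defs
begin

text \<open>Completing the square in every server load rewrites F, for arbitrary multipliers
  \<open>\<mu>, \<nu>\<close>, as \<open>-\<Sum>\<^sub>j (\<mu>\<^sub>j\<^sup>2 + \<nu>\<^sub>j\<^sup>2)/4 + \<Sum>\<^sub>i \<Sum>\<^sub>j x\<^sub>i\<^sub>j \<phi>\<^sub>i\<^sub>j\<close> plus a sum of squared residuals
  \<open>(\<Sum>\<^sub>i sqrt(D\<^sub>i\<^sub>j) x\<^sub>i\<^sub>j - \<mu>\<^sub>j/2)\<^sup>2\<close>. A device contributes at least \<open>min 0 (min\<^sub>j \<phi>\<^sub>i\<^sub>j)\<close> to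
  the middle sum, so g is a lower bound for F on the feasible set (weak duality), while the
  recovered assignment attains this bound row by row. Hence the gap of the recovered solution is
  at most its sum of squared residuals. At a dual maximiser all multipliers are nonnegative
  (clipping a negative one to 0 lowers the quadratic penalty and lowers no \<open>\<phi>\<^sub>i\<^sub>j\<close>), so
  \<open>sqrt(\<mu>\<^sub>j\<^sup>2/4) = \<mu>\<^sub>j/2\<close> and the residuals are the \<open>\<Delta>\<close>'s: the bound holds with constant 1.\<close>

lemma finite_feasible:
  fixes M :: "'m set" and E :: "'e set"
  assumes "finite M" "finite E"
  shows "finite (feasible M E)"
proof -
  define S where "S = {g::'e \<Rightarrow> real. \<forall>j. (j \<in> E \<longrightarrow> g j \<in> {0,1}) \<and> (j \<notin> E \<longrightarrow> g j = 0)}"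
  have "finite S"
    unfolding S_def by (rule finite_set_of_finite_funs[OF assms(2)]) simp
  then have "finite {X::'m \<Rightarrow> 'e \<Rightarrow> real. \<forall>i. (i \<in> M \<longrightarrow> X i \<in> S) \<and> (i \<notin> M \<longrightarrow> X i = (\<lambda>_. 0))}"
    by (rule finite_set_of_finite_funs[OF assms(1)])
  moreover have "feasible M E \<subseteq> {X. \<forall>i. (i \<in> M \<longrightarrow> X i \<in> S) \<and> (i \<notin> M \<longrightarrow> X i = (\<lambda>_. 0))}"
    unfolding feasible_def S_def by (auto simp: fun_eq_iff)
  ultimately show ?thesis
    by (rule finite_subset[rotated])
qed

lemma zero_in_feasible: "(\<lambda>_ _. 0) \<in> feasible M E"
  unfolding feasible_def by auto

lemma objF_completed_square:
  "objF M E Dcm Des c X =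
     - (\<Sum>j\<in>E. (mu j)^2 / 4 + (nu j)^2 / 4)
     + (\<Sum>i\<in>M. \<Sum>j\<in>E. X i j * phi Dcm Des c mu nu i j)
     + (\<Sum>j\<in>E. ((\<Sum>i\<in>M. sqrt (Dcm i j) * X i j) - mu j / 2)^2
               + ((\<Sum>i\<in>M. sqrt (Des i j) * X i j) - nu j / 2)^2)"
proof -
  define A where "A j = (\<Sum>i\<in>M. sqrt (Dcm i j) * X i j)" for j
  define B where "B j = (\<Sum>i\<in>M. sqrt (Des i j) * X i j)" for j
  have "(\<Sum>i\<in>M. \<Sum>j\<in>E. X i j * phi Dcm Des c mu nu i j)
      = (\<Sum>i\<in>M. \<Sum>j\<in>E. mu j * (sqrt (Dcm i j) * X i j))
      + (\<Sum>i\<in>M. \<Sum>j\<in>E. nu j * (sqrt (Des i j) * X i j))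
      + (\<Sum>i\<in>M. \<Sum>j\<in>E. c i j * X i j)"
    unfolding phi_def by (simp add: sum.distrib algebra_simps)
  also have "\<dots> = (\<Sum>j\<in>E. mu j * A j) + (\<Sum>j\<in>E. nu j * B j) + (\<Sum>i\<in>M. \<Sum>j\<in>E. c i j * X i j)"
    unfolding A_def B_def by (subst (1 2) sum.swap) (simp add: sum_distrib_left)
  finally have linear: "(\<Sum>i\<in>M. \<Sum>j\<in>E. X i j * phi Dcm Des c mu nu i j)
      = (\<Sum>j\<in>E. mu j * A j) + (\<Sum>j\<in>E. nu j * B j) + (\<Sum>i\<in>M. \<Sum>j\<in>E. c i j * X i j)" .
  have "(\<Sum>j\<in>E. (A j - mu j / 2)^2 + (B j - nu j / 2)^2)
      = (\<Sum>j\<in>E. (A j)^2 + (B j)^2 - mu j * A j - nu j * B j + ((mu j)^2 / 4 + (nu j)^2 / 4))"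
    by (intro sum.cong refl) (simp add: power2_eq_square algebra_simps)
  then have quadratic: "(\<Sum>j\<in>E. (A j - mu j / 2)^2 + (B j - nu j / 2)^2)
      = (\<Sum>j\<in>E. (A j)^2) + (\<Sum>j\<in>E. (B j)^2) - (\<Sum>j\<in>E. mu j * A j) - (\<Sum>j\<in>E. nu j * B j)
        + (\<Sum>j\<in>E. (mu j)^2 / 4 + (nu j)^2 / 4)"
    by (simp add: sum.distrib sum_subtractf)
  show ?thesis
    unfolding objF_def linear A_def[symmetric] B_def[symmetric] quadratic by simp
qed

lemma sum_mult_ge_min_zero_Min:
  fixes x p :: "'a \<Rightarrow> real"
  assumes "finite E" "\<And>j. j \<in> E \<Longrightarrow> x j \<ge> 0" "(\<Sum>j\<in>E. x j) \<le> 1"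
  shows "min 0 (Min (p ` E)) \<le> (\<Sum>j\<in>E. x j * p j)"
proof -
  define m where "m = min 0 (Min (p ` E))"
  have "m \<le> m * (\<Sum>j\<in>E. x j)"
    using assms(3) mult_left_mono_neg[of "sum x E" 1 m] by (simp add: m_def)
  also have "\<dots> = (\<Sum>j\<in>E. x j * m)"
    by (simp add: sum_distrib_left mult.commute)
  also have "\<dots> \<le> (\<Sum>j\<in>E. x j * p j)"
  proof (rule sum_mono)
    fix j assume "j \<in> E"
    then have "Min (p ` E) \<le> p j"
      using assms(1) by simp
    then have "m \<le> p j"
      unfolding m_def by linarith
    then show "x j * m \<le> x j * p j"
      using assms(2)[OF \<open>j \<in> E\<close>] by (rule mult_left_mono)
  qed
  finally show ?thesis
    unfolding m_def .
qed

lemma dual_g_le_objF: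
  assumes "finite E" "X \<in> feasible M E"
  shows "dual_g M E Dcm Des c mu nu \<le> objF M E Dcm Des c X"
proof -
  have "X i j = 0 \<or> X i j = 1" "i \<in> M \<Longrightarrow> (\<Sum>j\<in>E. X i j) \<le> 1" for i j
    using assms(2) by (simp_all add: feasible_def)
  then have "0 \<le> X i j" "i \<in> M \<Longrightarrow> (\<Sum>j\<in>E. X i j) \<le> 1" for i j
    by (metis order_refl zero_le_one, simp)
  then have "(\<Sum>i\<in>M. min 0 (Min (phi Dcm Des c mu nu i ` E)))
      \<le> (\<Sum>i\<in>M. \<Sum>j\<in>E. X i j * phi Dcm Des c mu nu i j)"
    using assms(1) by (intro sum_mono sum_mult_ge_min_zero_Min) auto
  moreover have "0 \<le> (\<Sum>j\<in>E. ((\<Sum>i\<in>M. sqrt (Dcm i j) * X i j) - mu j / 2)^2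
                          + ((\<Sum>i\<in>M. sqrt (Des i j) * X i j) - nu j / 2)^2)"
    by (intro sum_nonneg) auto
  ultimately show ?thesis
    unfolding objF_completed_square[where mu = mu and nu = nu] dual_g_def by linarith
qed

lemma dual_g_le_fstar:
  assumes "finite M" "finite E"
  shows "dual_g M E Dcm Des c mu nu \<le> fstar M E Dcm Des c"
  unfolding fstar_def using assms finite_feasible[OF assms] zero_in_feasible[of M E]
  by (subst Min_ge_iff) (auto intro: dual_g_le_objF)

lemma recovered_row_sum:
  assumes "finite E" "recovered M E Dcm Des c mu nu X" "i \<in> M"
  shows "(\<Sum>j\<in>E. X i j * phi Dcm Des c mu nu i j) = min 0 (Min (phi Dcm Des c mu nu i ` E))"
proof (cases "Min (phi Dcm Des c mu nu i ` E) \<le> 0")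
  case True
  then obtain j where j: "j \<in> E" "phi Dcm Des c mu nu i j = Min (phi Dcm Des c mu nu i ` E)"
      "X i j = 1" "\<forall>k\<in>E. k \<noteq> j \<longrightarrow> X i k = 0"
    using assms(2,3) unfolding recovered_def by blast
  have "(\<Sum>k\<in>E. X i k * phi Dcm Des c mu nu i k)
      = X i j * phi Dcm Des c mu nu i j + (\<Sum>k\<in>E - {j}. X i k * phi Dcm Des c mu nu i k)"
    using assms(1) j(1) by (rule sum.remove)
  also have "(\<Sum>k\<in>E - {j}. X i k * phi Dcm Des c mu nu i k) = 0"
    using j(4) by (intro sum.neutral) auto
  finally show ?thesis
    using j True by simp
next
  case False
  then show ?thesis
    using assms(2,3) unfolding recovered_def by auto
qed

lemma objF_recovered:
  assumes "finite E" "recovered M E Dcm Des c mu nu X"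
  shows "objF M E Dcm Des c X = dual_g M E Dcm Des c mu nu
     + (\<Sum>j\<in>E. ((\<Sum>i\<in>M. sqrt (Dcm i j) * X i j) - mu j / 2)^2
               + ((\<Sum>i\<in>M. sqrt (Des i j) * X i j) - nu j / 2)^2)"
  unfolding objF_completed_square[where mu = mu and nu = nu] dual_g_def
  using recovered_row_sum[OF assms] by simp

lemma recovered_gap_le_residuals:
  assumes "finite M" "finite E" "recovered M E Dcm Des c mu nu X"
  shows "objF M E Dcm Des c X - fstar M E Dcm Des c
     \<le> (\<Sum>j\<in>E. ((\<Sum>i\<in>M. sqrt (Dcm i j) * X i j) - mu j / 2)^2
               + ((\<Sum>i\<in>M. sqrt (Des i j) * X i j) - nu j / 2)^2)"
  using objF_recovered[OF assms(2,3)] dual_g_le_fstar[OF assms(1,2), of Dcm Des c mu nu]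
  by linarith

lemma Min_image_mono:
  fixes f g :: "'a \<Rightarrow> 'b::linorder"
  assumes "finite E" "E \<noteq> {}" "\<And>k. k \<in> E \<Longrightarrow> f k \<le> g k"
  shows "Min (f ` E) \<le> Min (g ` E)"
  using assms by (force simp: Min_le_iff)

lemma phi_swap: "phi Dcm Des c mu nu = phi Des Dcm c nu mu"
  by (simp add: fun_eq_iff phi_def add_ac)

lemma dual_g_swap: "dual_g M E Dcm Des c mu nu = dual_g M E Des Dcm c nu mu"
  unfolding dual_g_def phi_swap[of Dcm] by (simp add: add_ac)

lemma dual_g_less_clip:
  assumes "finite E" "E \<noteq> {}" "\<forall>i\<in>M. \<forall>j\<in>E. Dcm i j \<ge> 0"
    and "j \<in> E" "mu j < 0"
  shows "dual_g M E Dcm Des c mu nu < dual_g M E Dcm Des c (mu(j := 0)) nu"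
proof -
  have "(\<Sum>k\<in>E. ((mu(j := 0)) k)^2 / 4 + (nu k)^2 / 4) < (\<Sum>k\<in>E. (mu k)^2 / 4 + (nu k)^2 / 4)"
    using assms(1,4,5) by (intro sum_strict_mono_ex1) auto
  moreover have "(\<Sum>i\<in>M. min 0 (Min (phi Dcm Des c mu nu i ` E)))
      \<le> (\<Sum>i\<in>M. min 0 (Min (phi Dcm Des c (mu(j := 0)) nu i ` E)))"
  proof (intro sum_mono min.mono order.refl Min_image_mono[OF assms(1,2)])
    fix i k assume "i \<in> M" "k \<in> E"
    then have "mu k * sqrt (Dcm i k) \<le> (mu(j := 0)) k * sqrt (Dcm i k)"
      using assms(3,5) by (auto simp: mult_nonpos_nonneg)
    then show "phi Dcm Des c mu nu i k \<le> phi Dcm Des c (mu(j := 0)) nu i k"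
      unfolding phi_def by simp
  qed
  ultimately show ?thesis
    unfolding dual_g_def by linarith
qed

lemma dual_maximiser_nonneg:
  assumes "finite E" "E \<noteq> {}" "\<forall>i\<in>M. \<forall>j\<in>E. Dcm i j \<ge> 0 \<and> Des i j \<ge> 0"
    and "\<forall>mu nu. dual_g M E Dcm Des c mu nu \<le> dual_g M E Dcm Des c mus nus"
    and "j \<in> E"
  shows "mus j \<ge> 0" "nus j \<ge> 0"
proof -
  show "mus j \<ge> 0"
    using dual_g_less_clip[of E M Dcm j mus Des c nus] assms by (meson not_le)
  show "nus j \<ge> 0"
    using dual_g_less_clip[of E M Des j nus Dcm c mus] assms
    unfolding dual_g_swap[of M E Dcm] by (meson not_le)
qed

theorem theorem1:
  shows "\<exists>C::real. \<forall>(M::'m set) (E::'e set) Dcm Des c mus nus Xh.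
    finite M \<and> M \<noteq> {} \<and> finite E \<and> E \<noteq> {}
    \<and> (\<forall>i\<in>M. \<forall>j\<in>E. Dcm i j \<ge> 0 \<and> Des i j \<ge> 0)
    \<and> (\<forall>mu nu. dual_g M E Dcm Des c mu nu \<le> dual_g M E Dcm Des c mus nus)
    \<and> recovered M E Dcm Des c mus nus Xh
    \<longrightarrow> objF M E Dcm Des c Xh - fstar M E Dcm Des c
        \<le> C * (\<Sum>j\<in>E. (sqrt ((mus j)^2 / 4) - (\<Sum>i\<in>M. sqrt (Dcm i j) * Xh i j))^2
                      + (sqrt ((nus j)^2 / 4) - (\<Sum>i\<in>M. sqrt (Des i j) * Xh i j))^2)"
proof (intro exI[of _ 1] allI impI, elim conjE)
  fix M :: "'m set" and E :: "'e set" and Dcm Des c mus nus Xh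
  assume "finite M" "M \<noteq> {}" "finite E" "E \<noteq> {}"
    and D: "\<forall>i\<in>M. \<forall>j\<in>E. Dcm i j \<ge> 0 \<and> Des i j \<ge> 0"
    and opt: "\<forall>mu nu. dual_g M E Dcm Des c mu nu \<le> dual_g M E Dcm Des c mus nus"
    and rec: "recovered M E Dcm Des c mus nus Xh"
  have "(\<Sum>j\<in>E. (sqrt ((mus j)^2 / 4) - (\<Sum>i\<in>M. sqrt (Dcm i j) * Xh i j))^2
                  + (sqrt ((nus j)^2 / 4) - (\<Sum>i\<in>M. sqrt (Des i j) * Xh i j))^2)
      = (\<Sum>j\<in>E. ((\<Sum>i\<in>M. sqrt (Dcm i j) * Xh i j) - mus j / 2)^2
                  + ((\<Sum>i\<in>M. sqrt (Des i j) * Xh i j) - nus j / 2)^2)"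
    using dual_maximiser_nonneg[OF \<open>finite E\<close> \<open>E \<noteq> {}\<close> D opt]
    by (intro sum.cong refl) (simp add: real_sqrt_divide power2_commute)
  with recovered_gap_le_residuals[OF \<open>finite M\<close> \<open>finite E\<close> rec]
  show "objF M E Dcm Des c Xh - fstar M E Dcm Des c
        \<le> 1 * (\<Sum>j\<in>E. (sqrt ((mus j)^2 / 4) - (\<Sum>i\<in>M. sqrt (Dcm i j) * Xh i j))^2
                      + (sqrt ((nus j)^2 / 4) - (\<Sum>i\<in>M. sqrt (Des i j) * Xh i j))^2)"
    by simp
qed

end
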